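(* For any complex numbers $a,b,\alpha,\beta,\eta,\xi$ with $\beta a-\alpha b\neq0$ and any natural number $n\ge1$, \[ \sum_{r=0}^{\lfloor n/2\rfloor}\Psi\left(\begin{array}{cc|c} a & b & n \\ \alpha & \beta & r \end{array}\right)\xi^{\lfloor n/2\rfloor-r}\eta^r=\Psi(a\xi-\alpha\eta,\,b\xi-\beta\eta,\,n), \] \[ \sum_{r=0}^{\lfloor (n-1)/2\rfloor}\Phi\left(\begin{array}{cc|c} a & b & n \\ \alpha & \beta & r \end{array}\right)\xi^{\lfloor (n-1)/2\rfloor-r}\eta^r=\Phi(a\xi-\alpha\eta,\,b\xi-\beta\eta,\,n). \]
   Context: $\delta(m)=1$ for $m$ odd, $0$ for $m$ even; $\lfloor\cdot\rfloor$ is the floor. $\Psi(a,b,n)$, $\Phi(a,b,n)$ are defined by $\Psi(a,b,0)=2$, $\Psi(a,b,1)=1$, $\Psi(a,b,n+1)=(2a-b)^{\delta(n)}\Psi(a,b,n)-a\Psi(a,b,n-1)$ and $\Phi(a,b,0)=0$, $\Phi(a,b,1)=1$, $\Phi(a,b,n+1)=(2a-b)^{\delta(n+1)}\Phi(a,b,n)-a\Phi(a,b,n-1)$. For $n\ge1$ and numbers with $\beta a-\alpha b\ne0$, $\Psi\left(\begin{array}{cc|c} a & b & n \\ \alpha & \beta & r \end{array}\right)$ ($0\le r\le\lfloor n/2\rfloor$) and $\Phi\left(\begin{array}{cc|c} a & b & n \\ \alpha & \beta & r \end{array}\right)$ ($0\le r\le\lfloor (n-1)/2\rfloor$) are the unique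 numbers such that, identically in $x,y$, $(\beta a-\alpha b)^{\lfloor n/2\rfloor}\frac{x^n+y^n}{(x+y)^{\delta(n)}}=\sum_{r}\Psi\left(\begin{array}{cc|c} a & b & n \\ \alpha & \beta & r \end{array}\right)(\alpha x^2+\beta xy+\alpha y^2)^{\lfloor n/2\rfloor-r}(ax^2+bxy+ay^2)^r$ and $(\beta a-\alpha b)^{\lfloor (n-1)/2\rfloor}\frac{x^n-y^n}{(x-y)(x+y)^{\delta(n-1)}}=\sum_{r}\Phi\left(\begin{array}{cc|c} a & b & n \\ \alpha & \beta & r \end{array}\right)(\alpha x^2+\beta xy+\alpha y^2)^{\lfloor (n-1)/2\rfloor-r}(ax^2+bxy+ay^2)^r$. *)

theory Defs
  imports Complex_Main
begin

definition delta :: "nat \<Rightarrow> nat" where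
  "delta m = (if odd m then 1 else 0)"

fun Psi :: "complex \<Rightarrow> complex \<Rightarrow> nat \<Rightarrow> complex" where
  "Psi a b 0 = 2"
| "Psi a b (Suc 0) = 1"
| "Psi a b (Suc (Suc n)) = (2*a - b) ^ delta (Suc n) * Psi a b (Suc n) - a * Psi a b n"

fun Phi :: "complex \<Rightarrow> complex \<Rightarrow> nat \<Rightarrow> complex" where
  "Phi a b 0 = 0"
| "Phi a b (Suc 0) = 1"
| "Phi a b (Suc (Suc n)) = (2*a - b) ^ delta (Suc (Suc n)) * Phi a b (Suc n) - a * Phi a b n"

definition PsiC :: "complex \<Rightarrow> complex \<Rightarrow> complex \<Rightarrow> complex \<Rightarrow> nat \<Rightarrow> nat \<Rightarrow> complex" where
  "PsiC a b \<alpha> \<beta> n = (THE c. (\<forall>r. n div 2 < r \<longrightarrow> c r = 0) \<and>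
     (\<forall>x y::complex. (x + y) ^ delta n \<noteq> 0 \<longrightarrow>
        (\<beta>*a - \<alpha>*b) ^ (n div 2) * ((x^n + y^n) / (x + y) ^ delta n)
        = (\<Sum>r=0..n div 2. c r * (\<alpha>*x^2 + \<beta>*x*y + \<alpha>*y^2) ^ (n div 2 - r)
                                  * (a*x^2 + b*x*y + a*y^2) ^ r)))"

definition PhiC :: "complex \<Rightarrow> complex \<Rightarrow> complex \<Rightarrow> complex \<Rightarrow> nat \<Rightarrow> nat \<Rightarrow> complex" where
  "PhiC a b \<alpha> \<beta> n = (THE c. (\<forall>r. (n - 1) div 2 < r \<longrightarrow> c r = 0) \<and>
     (\<forall>x y::complex. (x - y) * (x + y) ^ delta (n - 1) \<noteq> 0 \<longrightarrow>
        (\<beta>*a - \<alpha>*b) ^ ((n - 1) div 2) * ((x^n - y^n) / ((x - y) * (x + y) ^ delta (n - 1)))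
        = (\<Sum>r=0..(n - 1) div 2. c r * (\<alpha>*x^2 + \<beta>*x*y + \<alpha>*y^2) ^ ((n - 1) div 2 - r)
                                  * (a*x^2 + b*x*y + a*y^2) ^ r)))"

end

theory Submission
  imports Defs
begin

text \<open>Write \<open>A = \<alpha>x\<^sup>2 + \<beta>xy + \<alpha>y\<^sup>2\<close>, \<open>B = ax\<^sup>2 + bxy + ay\<^sup>2\<close> and \<open>D = \<beta>a - \<alpha>b\<close>. Then
  \<open>aA - \<alpha>B = D xy\<close> and \<open>bA - \<beta>B = -D(x\<^sup>2 + y\<^sup>2)\<close>. Since \<open>\<Psi>(cA, cB, n) = c\<^bsup>\<lfloor>n/2\<rfloor>\<^esup> \<Psi>(A, B, n)\<close>
  and \<open>\<Psi>(xy, -(x\<^sup>2 + y\<^sup>2), n) (x + y)\<^bsup>\<delta>(n)\<^esup> = x\<^sup>n + y\<^sup>n\<close> (both sides obey the recurrence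
  \<open>s\<^sub>n\<^sub>+\<^sub>2 = (x + y) s\<^sub>n\<^sub>+\<^sub>1 - xy s\<^sub>n\<close>, because \<open>2xy + x\<^sup>2 + y\<^sup>2 = (x + y)\<^sup>2\<close>), the left-hand side of
  the defining identity of the coefficients is \<open>\<Psi>(aA - \<alpha>B, bA - \<beta>B, n)\<close>; likewise for \<open>\<Phi>\<close>.
  As \<open>\<Psi>(a\<xi> - \<alpha>\<eta>, b\<xi> - \<beta>\<eta>, n)\<close> is a binary form of degree \<open>\<lfloor>n/2\<rfloor>\<close> in \<open>(\<xi>, \<eta>)\<close>, its
  coefficients form a representing family. It is the only one: for all but at most two values
  of \<open>z\<close> there are \<open>x, y\<close> with \<open>x \<noteq> \<plusminus>y\<close>, \<open>A = 1\<close> and \<open>B = z\<close>, so two representing families give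
  polynomials in \<open>z\<close> that agree at infinitely many points.\<close>

lemma two_term_recurrence_unique:
  fixes u v :: "nat \<Rightarrow> 'a::{plus,times}"
  assumes "u 0 = v 0" "u (Suc 0) = v (Suc 0)"
    and "\<And>n. u (Suc (Suc n)) = p n * u (Suc n) + q n * u n"
    and "\<And>n. v (Suc (Suc n)) = p n * v (Suc n) + q n * v n"
  shows "u n = v n"
  by (induction n rule: induct_nat_012) (simp_all add: assms)

lemma delta_add_half: "delta n + n div 2 = Suc n div 2"
  by (simp add: delta_def)

lemma delta_Suc_Suc: "delta (Suc (Suc n)) = delta n"
  by (simp add: delta_def)

lemma Psi_power_sum: "Psi (x*y) (-(x^2 + y^2)) n * (x + y)^delta n = x^n + y^n"
proof (rule two_term_recurrence_unique[where p="\<lambda>_. x + y" and q="\<lambda>_. -(x*y)"])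
  fix n
  show "Psi (x*y) (-(x^2 + y^2)) (Suc (Suc n)) * (x + y)^delta (Suc (Suc n))
    = (x + y) * (Psi (x*y) (-(x^2 + y^2)) (Suc n) * (x + y)^delta (Suc n))
      + -(x*y) * (Psi (x*y) (-(x^2 + y^2)) n * (x + y)^delta n)"
    by (cases "even n") (simp_all add: delta_def power2_eq_square algebra_simps)
qed (simp_all add: delta_def algebra_simps)

lemma Phi_power_diff: "Phi (x*y) (-(x^2 + y^2)) n * (x - y) * (x + y)^delta (n - 1) = x^n - y^n"
proof (rule two_term_recurrence_unique[where p="\<lambda>_. x + y" and q="\<lambda>_. -(x*y)"])
  fix n
  show "Phi (x*y) (-(x^2 + y^2)) (Suc (Suc n)) * (x - y) * (x + y)^delta (Suc (Suc n) - 1)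
    = (x + y) * (Phi (x*y) (-(x^2 + y^2)) (Suc n) * (x - y) * (x + y)^delta (Suc n - 1))
      + -(x*y) * (Phi (x*y) (-(x^2 + y^2)) n * (x - y) * (x + y)^delta (n - 1))"
    by (cases n rule: parity_cases) (simp_all add: delta_def power2_eq_square algebra_simps)
qed (simp_all add: delta_def algebra_simps)

lemma Psi_scale: "Psi (c*A) (c*B) n = c^(n div 2) * Psi A B n"
proof (induction n rule: induct_nat_012)
  case (ge2 n)
  have "Psi (c*A) (c*B) (Suc (Suc n))
      = (c*(2*A - B))^delta (Suc n) * Psi (c*A) (c*B) (Suc n) - c*A * Psi (c*A) (c*B) n"
    by (simp add: algebra_simps)
  also have "\<dots> = c^(delta (Suc n) + Suc n div 2) * ((2*A - B)^delta (Suc n) * Psi A B (Suc n))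
      - c^Suc (n div 2) * (A * Psi A B n)"
    by (simp only: ge2) (simp add: power_mult_distrib power_add mult_ac)
  also have "\<dots> = c^(Suc (Suc n) div 2) * Psi A B (Suc (Suc n))"
    by (simp only: delta_add_half) (simp add: right_diff_distrib)
  finally show ?case .
qed simp_all

lemma Phi_scale: "Phi (c*A) (c*B) n = c^((n - 1) div 2) * Phi A B n"
proof (induction n rule: induct_nat_012)
  case (ge2 n)
  have "Phi (c*A) (c*B) (Suc (Suc n))
      = (c*(2*A - B))^delta n * Phi (c*A) (c*B) (Suc n) - c*A * Phi (c*A) (c*B) n"
    by (simp add: delta_Suc_Suc algebra_simps)
  also have "\<dots> = c^(delta n + n div 2) * ((2*A - B)^delta n * Phi A B (Suc n))
      - c^Suc ((n - 1) div 2) * (A * Phi A B n)"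
    by (simp only: ge2) (simp add: power_mult_distrib power_add mult_ac)
  also have "\<dots> = c^(Suc n div 2) * Phi A B (Suc (Suc n))"
    by (cases n) (simp_all only: delta_add_half, simp_all add: delta_Suc_Suc right_diff_distrib)
  finally show ?case by simp
qed simp_all

definition binary_form :: "nat \<Rightarrow> ('a::comm_ring_1 \<Rightarrow> 'a \<Rightarrow> 'a) \<Rightarrow> bool" where
  "binary_form m f \<longleftrightarrow> (\<exists>c. \<forall>\<xi> \<eta>. f \<xi> \<eta> = (\<Sum>r=0..m. c r * \<xi>^(m - r) * \<eta>^r))"

lemma binary_form_zero: "binary_form m (\<lambda>_ _. 0)"
  unfolding binary_form_def by (rule exI[of _ "\<lambda>_. 0"]) simp

lemma binary_form_const: "binary_form 0 (\<lambda>_ _. k)"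
  unfolding binary_form_def by (rule exI[of _ "\<lambda>_. k"]) simp

lemma binary_form_diff:
  assumes "binary_form m f" "binary_form m g"
  shows "binary_form m (\<lambda>\<xi> \<eta>. f \<xi> \<eta> - g \<xi> \<eta>)"
proof -
  obtain c d where "\<And>\<xi> \<eta>. f \<xi> \<eta> = (\<Sum>r=0..m. c r * \<xi>^(m - r) * \<eta>^r)"
    and "\<And>\<xi> \<eta>. g \<xi> \<eta> = (\<Sum>r=0..m. d r * \<xi>^(m - r) * \<eta>^r)"
    using assms unfolding binary_form_def by blast
  then show ?thesis
    unfolding binary_form_def
    by (intro exI[of _ "\<lambda>r. c r - d r"]) (simp add: sum_subtractf left_diff_distrib)
qed

lemma binary_form_linear_mult:
  assumes "binary_form m f"
  shows "binary_form (Suc m) (\<lambda>\<xi> \<eta>. (u*\<xi> + v*\<eta>) * f \<xi> \<eta>)"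
proof -
  obtain c where f: "\<And>\<xi> \<eta>. f \<xi> \<eta> = (\<Sum>r=0..m. c r * \<xi>^(m - r) * \<eta>^r)"
    using assms unfolding binary_form_def by blast
  define c' where "c' r = (if r \<le> m then c r else 0)" for r
  define d where "d r = u * c' r + v * (if r = 0 then 0 else c' (r - 1))" for r
  have "(u*\<xi> + v*\<eta>) * f \<xi> \<eta> = (\<Sum>r=0..Suc m. d r * \<xi>^(Suc m - r) * \<eta>^r)" for \<xi> \<eta>
  proof -
    have "u*\<xi> * f \<xi> \<eta> = (\<Sum>r=0..Suc m. u * c' r * \<xi>^(Suc m - r) * \<eta>^r)"
      unfolding f c'_def sum_distrib_left sum.atLeast0_atMost_Suc
      by (auto simp: Suc_diff_le mult_ac intro!: sum.cong)
    moreover have "v*\<eta> * f \<xi> \<eta>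
        = (\<Sum>r=0..Suc m. v * (if r = 0 then 0 else c' (r - 1)) * \<xi>^(Suc m - r) * \<eta>^r)"
      unfolding f c'_def sum_distrib_left
      by (simp add: sum.atLeast0_atMost_Suc_shift mult_ac del: sum.cl_ivl_Suc)
    ultimately show ?thesis
      unfolding d_def by (simp add: distrib_right sum.distrib del: sum.cl_ivl_Suc)
  qed
  then show ?thesis
    unfolding binary_form_def by blast
qed

lemma binary_form_linear_power_mult:
  assumes "binary_form m f"
  shows "binary_form (k + m) (\<lambda>\<xi> \<eta>. (u*\<xi> + v*\<eta>)^k * f \<xi> \<eta>)"
proof (induction k)
  case 0
  with assms show ?case by simp
next
  case (Suc k)
  from binary_form_linear_mult[OF this, of u v] show ?case
    by (simp add: mult.assoc)
qed

lemma binary_form_Psi: "binary_form (n div 2) (\<lambda>\<xi> \<eta>. Psi (a*\<xi> - \<alpha>*\<eta>) (b*\<xi> - \<beta>*\<eta>) n)"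
proof (induction n rule: induct_nat_012)
  case (ge2 n)
  let ?P = "\<lambda>k \<xi> \<eta>. Psi (a*\<xi> - \<alpha>*\<eta>) (b*\<xi> - \<beta>*\<eta>) k"
  have "binary_form (delta (Suc n) + Suc n div 2)
      (\<lambda>\<xi> \<eta>. ((2*a - b)*\<xi> + (\<beta> - 2*\<alpha>)*\<eta>)^delta (Suc n) * ?P (Suc n) \<xi> \<eta>)"
    using ge2(2) by (rule binary_form_linear_power_mult)
  moreover have "binary_form (Suc (n div 2)) (\<lambda>\<xi> \<eta>. (a*\<xi> + (-\<alpha>)*\<eta>) * ?P n \<xi> \<eta>)"
    using ge2(1) by (rule binary_form_linear_mult)
  ultimately have "binary_form (Suc (n div 2)) (\<lambda>\<xi> \<eta>.
      ((2*a - b)*\<xi> + (\<beta> - 2*\<alpha>)*\<eta>)^delta (Suc n) * ?P (Suc n) \<xi> \<eta> - (a*\<xi> + (-\<alpha>)*\<eta>) * ?P n \<xi> \<eta>)"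
    unfolding delta_add_half by (simp add: binary_form_diff)
  moreover have "2*(a*\<xi> - \<alpha>*\<eta>) - (b*\<xi> - \<beta>*\<eta>) = (2*a - b)*\<xi> + (\<beta> - 2*\<alpha>)*\<eta>" for \<xi> \<eta>
    by (simp add: algebra_simps)
  ultimately show ?case
    by simp
qed (simp_all add: binary_form_const)

lemma binary_form_Phi: "binary_form ((n - 1) div 2) (\<lambda>\<xi> \<eta>. Phi (a*\<xi> - \<alpha>*\<eta>) (b*\<xi> - \<beta>*\<eta>) n)"
proof (induction n rule: induct_nat_012)
  case (ge2 n)
  let ?P = "\<lambda>k \<xi> \<eta>. Phi (a*\<xi> - \<alpha>*\<eta>) (b*\<xi> - \<beta>*\<eta>) k"
  have "binary_form (delta n + n div 2)
      (\<lambda>\<xi> \<eta>. ((2*a - b)*\<xi> + (\<beta> - 2*\<alpha>)*\<eta>)^delta n * ?P (Suc n) \<xi> \<eta>)"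
    using ge2(2) by (simp add: binary_form_linear_power_mult)
  moreover have "binary_form (Suc n div 2) (\<lambda>\<xi> \<eta>. (a*\<xi> + (-\<alpha>)*\<eta>) * ?P n \<xi> \<eta>)"
  proof (cases n)
    case 0
    then show ?thesis by (simp add: binary_form_zero)
  next
    case (Suc m)
    with binary_form_linear_mult[OF ge2(1), of a "-\<alpha>"] show ?thesis by simp
  qed
  ultimately have "binary_form (Suc n div 2) (\<lambda>\<xi> \<eta>.
      ((2*a - b)*\<xi> + (\<beta> - 2*\<alpha>)*\<eta>)^delta n * ?P (Suc n) \<xi> \<eta> - (a*\<xi> + (-\<alpha>)*\<eta>) * ?P n \<xi> \<eta>)"
    unfolding delta_add_half by (simp add: binary_form_diff)
  moreover have "2*(a*\<xi> - \<alpha>*\<eta>) - (b*\<xi> - \<beta>*\<eta>) = (2*a - b)*\<xi> + (\<beta> - 2*\<alpha>)*\<eta>" for \<xi> \<eta>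
    by (simp add: algebra_simps)
  ultimately show ?case
    by (simp add: delta_Suc_Suc)
qed (simp_all add: binary_form_zero binary_form_const)

text \<open>An abbreviation, so that it matches the quadratic forms spelled out in
  the definitions of \<open>PsiC\<close> and \<open>PhiC\<close>.\<close>
abbreviation sym_quadratic :: "'a::comm_ring_1 \<Rightarrow> 'a \<Rightarrow> 'a \<Rightarrow> 'a \<Rightarrow> 'a" where
  "sym_quadratic p q x y \<equiv> p*x^2 + q*x*y + p*y^2"

lemma sym_quadratic_combinations:
  "a * sym_quadratic \<alpha> \<beta> x y - \<alpha> * sym_quadratic a b x y = (\<beta>*a - \<alpha>*b) * (x*y)"
  "b * sym_quadratic \<alpha> \<beta> x y - \<beta> * sym_quadratic a b x y = (\<beta>*a - \<alpha>*b) * -(x^2 + y^2)"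
  by (simp_all add: power2_eq_square algebra_simps)

lemma Psi_sym_quadratic:
  "Psi (a * sym_quadratic \<alpha> \<beta> x y - \<alpha> * sym_quadratic a b x y)
       (b * sym_quadratic \<alpha> \<beta> x y - \<beta> * sym_quadratic a b x y) n * (x + y)^delta n
   = (\<beta>*a - \<alpha>*b)^(n div 2) * (x^n + y^n)"
  unfolding sym_quadratic_combinations Psi_scale using Psi_power_sum[of x y n] by (simp add: mult.assoc)

lemma Phi_sym_quadratic:
  "Phi (a * sym_quadratic \<alpha> \<beta> x y - \<alpha> * sym_quadratic a b x y)
       (b * sym_quadratic \<alpha> \<beta> x y - \<beta> * sym_quadratic a b x y) n * (x - y) * (x + y)^delta (n - 1)
   = (\<beta>*a - \<alpha>*b)^((n - 1) div 2) * (x^n - y^n)"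
  unfolding sym_quadratic_combinations Phi_scale using Phi_power_diff[of x y n] by (simp add: mult.assoc)

lemma sym_quadratic_eq_squares:
  fixes p q x y :: "'a::field_char_0"
  shows "sym_quadratic p q x y = ((2*p + q)*(x + y)^2 + (2*p - q)*(x - y)^2) / 4"
  by (simp add: power2_eq_square field_simps)

lemma ex_sum_diff_squares:
  fixes u v :: complex
  obtains x y where "(x + y)^2 = u" "(x - y)^2 = v"
proof (rule that[of "(csqrt u + csqrt v) / 2" "(csqrt u - csqrt v) / 2"])
  show "((csqrt u + csqrt v) / 2 + (csqrt u - csqrt v) / 2)^2 = u"
    by (simp add: add_divide_distrib[symmetric])
  show "((csqrt u + csqrt v) / 2 - (csqrt u - csqrt v) / 2)^2 = v"
    by (simp add: diff_divide_distrib[symmetric])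
qed

lemma sym_quadratics_attain:
  fixes a b \<alpha> \<beta> P Q :: complex
  assumes D: "\<beta>*a - \<alpha>*b \<noteq> 0"
  obtains x y where "sym_quadratic \<alpha> \<beta> x y = P" "sym_quadratic a b x y = Q"
    "(\<beta>*a - \<alpha>*b) * (x + y)^2 = (2*a - b)*P - (2*\<alpha> - \<beta>)*Q"
    "(\<beta>*a - \<alpha>*b) * (x - y)^2 = (2*\<alpha> + \<beta>)*Q - (2*a + b)*P"
proof -
  define D where "D = \<beta>*a - \<alpha>*b"
  obtain x y where "(x + y)^2 = ((2*a - b)*P - (2*\<alpha> - \<beta>)*Q) / D"
    and "(x - y)^2 = ((2*\<alpha> + \<beta>)*Q - (2*a + b)*P) / D"
    by (rule ex_sum_diff_squares)
  with D have U: "D * (x + y)^2 = (2*a - b)*P - (2*\<alpha> - \<beta>)*Q"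
    and V: "D * (x - y)^2 = (2*\<alpha> + \<beta>)*Q - (2*a + b)*P"
    by (simp_all add: D_def)
  have quad: "D * sym_quadratic p q x y
      = ((2*p + q) * (D * (x + y)^2) + (2*p - q) * (D * (x - y)^2)) / 4" for p q
    unfolding sym_quadratic_eq_squares by (simp add: algebra_simps)
  have "D * sym_quadratic \<alpha> \<beta> x y = D * P" "D * sym_quadratic a b x y = D * Q"
    unfolding quad U V by (simp_all add: D_def field_simps)
  with D U V show ?thesis
    by (intro that) (simp_all add: D_def)
qed

lemma finite_linear_solutions:
  fixes p q :: "'a::field"
  assumes "p \<noteq> 0 \<or> q \<noteq> 0"
  shows "finite {z. p*z = q}"
proof -
  have "{z. p*z = q} \<subseteq> {q / p}"
    using assms by (auto simp: field_simps)
  then show ?thesis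
    by (rule finite_subset) simp
qed

lemma sym_quadratic_coeffs_unique:
  fixes c d :: "nat \<Rightarrow> complex"
  assumes D: "\<beta>*a - \<alpha>*b \<noteq> 0"
    and eq: "\<And>x y. x + y \<noteq> 0 \<Longrightarrow> x - y \<noteq> 0 \<Longrightarrow>
      (\<Sum>r=0..m. c r * sym_quadratic \<alpha> \<beta> x y^(m - r) * sym_quadratic a b x y^r)
      = (\<Sum>r=0..m. d r * sym_quadratic \<alpha> \<beta> x y^(m - r) * sym_quadratic a b x y^r)"
  shows "\<forall>r\<le>m. c r = d r"
proof -
  define E where "E = {z. (2*\<alpha> - \<beta>)*z = 2*a - b} \<union> {z. (2*\<alpha> + \<beta>)*z = 2*a + b}"
  have "finite E"
    unfolding E_def using D by (intro finite_UnI finite_linear_solutions) (auto simp: add_eq_0_iff)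
  then have "infinite (UNIV - E)"
    by (simp add: Diff_infinite_finite infinite_UNIV_char_0)
  moreover have "UNIV - E \<subseteq> {z. (\<Sum>r\<le>m. (c r - d r) * z^r) = 0}"
  proof
    fix z
    assume "z \<in> UNIV - E"
    then have z: "(2*\<alpha> - \<beta>)*z \<noteq> 2*a - b" "(2*\<alpha> + \<beta>)*z \<noteq> 2*a + b"
      unfolding E_def by auto
    obtain x y where xy: "sym_quadratic \<alpha> \<beta> x y = 1" "sym_quadratic a b x y = z"
      and "(\<beta>*a - \<alpha>*b) * (x + y)^2 = (2*a - b)*1 - (2*\<alpha> - \<beta>)*z"
      and "(\<beta>*a - \<alpha>*b) * (x - y)^2 = (2*\<alpha> + \<beta>)*z - (2*a + b)*1"
      using sym_quadratics_attain[OF D] .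
    with z have "x + y \<noteq> 0" "x - y \<noteq> 0"
      by auto
    from eq[OF this] show "z \<in> {z. (\<Sum>r\<le>m. (c r - d r) * z^r) = 0}"
      unfolding xy by (simp add: atLeast0AtMost sum_subtractf left_diff_distrib)
  qed
  ultimately have "infinite {z. (\<Sum>r\<le>m. (c r - d r) * z^r) = 0}"
    using finite_subset by blast
  then show ?thesis
    using polyfun_finite_roots[of "\<lambda>r. c r - d r" m] by auto
qed

lemma THE_sym_quadratic_coeffs:
  fixes N :: "complex \<Rightarrow> complex \<Rightarrow> bool" and W G :: "complex \<Rightarrow> complex \<Rightarrow> complex"
  assumes D: "\<beta>*a - \<alpha>*b \<noteq> 0"
    and G: "binary_form m G"
    and N: "\<And>x y. x + y \<noteq> 0 \<Longrightarrow> x - y \<noteq> 0 \<Longrightarrow> N x y"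
    and W: "\<And>x y. N x y \<Longrightarrow> W x y = G (sym_quadratic \<alpha> \<beta> x y) (sym_quadratic a b x y)"
  shows "(\<Sum>r=0..m. (THE c. (\<forall>r. m < r \<longrightarrow> c r = 0) \<and> (\<forall>x y. N x y \<longrightarrow> W x y
      = (\<Sum>r=0..m. c r * sym_quadratic \<alpha> \<beta> x y^(m - r) * sym_quadratic a b x y^r))) r
      * \<xi>^(m - r) * \<eta>^r)
    = G \<xi> \<eta>"
proof -
  obtain c where c: "\<And>\<xi> \<eta>. G \<xi> \<eta> = (\<Sum>r=0..m. c r * \<xi>^(m - r) * \<eta>^r)"
    using G unfolding binary_form_def by blast
  define c' where "c' r = (if r \<le> m then c r else 0)" for r
  have c': "G \<xi> \<eta> = (\<Sum>r=0..m. c' r * \<xi>^(m - r) * \<eta>^r)" for \<xi> \<eta>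
    unfolding c c'_def by simp
  let ?R = "\<lambda>c. (\<forall>r. m < r \<longrightarrow> c r = 0) \<and> (\<forall>x y. N x y \<longrightarrow> W x y
      = (\<Sum>r=0..m. c r * sym_quadratic \<alpha> \<beta> x y^(m - r) * sym_quadratic a b x y^r))"
  have "?R c'"
    using W c' by (simp add: c'_def)
  moreover have "d = c'" if d: "?R d" for d
  proof
    have "\<forall>r\<le>m. d r = c' r"
    proof (rule sym_quadratic_coeffs_unique[OF D])
      fix x y :: complex
      assume "x + y \<noteq> 0" "x - y \<noteq> 0"
      then have "N x y"
        by (rule N)
      with d W c' show "(\<Sum>r=0..m. d r * sym_quadratic \<alpha> \<beta> x y^(m - r) * sym_quadratic a b x y^r)
          = (\<Sum>r=0..m. c' r * sym_quadratic \<alpha> \<beta> x y^(m - r) * sym_quadratic a b x y^r)"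
        by simp
    qed
    with d show "d r = c' r" for r
      by (cases "r \<le> m") (simp_all add: c'_def)
  qed
  ultimately have "(THE c. ?R c) = c'"
    by (rule the_equality)
  with c' show ?thesis
    by simp
qed

lemma sum_PsiC_eq_Psi:
  assumes "\<beta>*a - \<alpha>*b \<noteq> 0"
  shows "(\<Sum>r=0..n div 2. PsiC a b \<alpha> \<beta> n r * \<xi>^(n div 2 - r) * \<eta>^r)
    = Psi (a*\<xi> - \<alpha>*\<eta>) (b*\<xi> - \<beta>*\<eta>) n"
  unfolding PsiC_def
proof (rule THE_sym_quadratic_coeffs[OF assms binary_form_Psi])
  fix x y :: complex
  assume "(x + y)^delta n \<noteq> 0"
  with Psi_sym_quadratic[of a \<alpha> x \<beta> y b n]
  show "(\<beta>*a - \<alpha>*b)^(n div 2) * ((x^n + y^n) / (x + y)^delta n)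
      = Psi (a * sym_quadratic \<alpha> \<beta> x y - \<alpha> * sym_quadratic a b x y)
            (b * sym_quadratic \<alpha> \<beta> x y - \<beta> * sym_quadratic a b x y) n"
    by (simp add: divide_eq_eq mult.assoc)
qed simp

lemma sum_PhiC_eq_Phi:
  assumes "\<beta>*a - \<alpha>*b \<noteq> 0"
  shows "(\<Sum>r=0..(n - 1) div 2. PhiC a b \<alpha> \<beta> n r * \<xi>^((n - 1) div 2 - r) * \<eta>^r)
    = Phi (a*\<xi> - \<alpha>*\<eta>) (b*\<xi> - \<beta>*\<eta>) n"
  unfolding PhiC_def
proof (rule THE_sym_quadratic_coeffs[OF assms binary_form_Phi])
  fix x y :: complex
  assume "(x - y) * (x + y)^delta (n - 1) \<noteq> 0"
  with Phi_sym_quadratic[of a \<alpha> x \<beta> y b n]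
  show "(\<beta>*a - \<alpha>*b)^((n - 1) div 2) * ((x^n - y^n) / ((x - y) * (x + y)^delta (n - 1)))
      = Phi (a * sym_quadratic \<alpha> \<beta> x y - \<alpha> * sym_quadratic a b x y)
            (b * sym_quadratic \<alpha> \<beta> x y - \<beta> * sym_quadratic a b x y) n"
    by (simp add: divide_eq_eq mult.assoc)
qed simp

theorem theorem10p2:
  fixes a b \<alpha> \<beta> \<eta> \<xi> :: complex and n :: nat
  assumes "\<beta>*a - \<alpha>*b \<noteq> 0" and "n \<ge> 1"
  shows "((\<Sum>r=0..n div 2. PsiC a b \<alpha> \<beta> n r * \<xi> ^ (n div 2 - r) * \<eta> ^ r)
           = Psi (a*\<xi> - \<alpha>*\<eta>) (b*\<xi> - \<beta>*\<eta>) n)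
     \<and> ((\<Sum>r=0..(n - 1) div 2. PhiC a b \<alpha> \<beta> n r * \<xi> ^ ((n - 1) div 2 - r) * \<eta> ^ r)
           = Phi (a*\<xi> - \<alpha>*\<eta>) (b*\<xi> - \<beta>*\<eta>) n)"
  \<comment> \<open>The identities also hold for \<open>n = 0\<close>.\<close>
  using sum_PsiC_eq_Psi[OF assms(1)] sum_PhiC_eq_Phi[OF assms(1)] by blast

end
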